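(* Let $b \geq 2$ be an integer and let $r$ be an integer with $1 \leq r \leq b$. Let $n_1, n_2, \dots, n_r$ be integers such that $0 \leq n_1 \leq n_2 \leq \dots \leq n_r$. Then $$ \sum_{1 \leq i \leq r} S_b(n_i) + \sum_{1 \leq i \leq r-1} (r-i)\, n_i \leq S_b\left(\sum_{1 \leq i \leq r} n_i\right). $$
   Context: For an integer $b \geq 2$ and a nonnegative integer $n$, $s_b(n)$ denotes the sum of the digits in the base-$b$ expansion of $n$, and $S_b(n) := \sum_{1 \leq j \leq n-1} s_b(j)$ (an empty sum being $0$, so $S_b(0)=S_b(1)=0$). *)

theory Defs
  imports Main
begin

fun digit_sum :: "nat \<Rightarrow> nat \<Rightarrow> nat" where
  "digit_sum b n = (if b < 2 \<or> n = 0 then 0 else n mod b + digit_sum b (n div b))"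

declare digit_sum.simps[simp del]

definition S :: "nat \<Rightarrow> nat \<Rightarrow> nat" where
  "S b n = (\<Sum>j = 1..<n. digit_sum b j)"

end

(*
  Pad the sorted n_i with zeros to a non-increasing sequence h_0 >= ... >= h_(b-1),
  h_k = n_(r-k); the claim becomes  sum_k (S(h_k) + k h_k) <= S(sum_k h_k).
  Sorting the j < h by their last digit d gives S(h) = sum_d (S(m_d) + d m_d), where m_d
  is the number of such j. Splitting every h_k in this way and applying induction on
  sum_k h_k to each column (m_d(h_k))_k reduces the claim to sequences Q + tau_d with
  0 <= tau_d <= b, tau non-increasing (Q = 0 covers h_0 <= b).
  Such a tau is a Young diagram in a b x b box. For i < b, the digit sum of Q + i is
  s(Q) + i minus a fixed carry loss from some row k_0 on, so the claim follows from two
  facts about diagrams with a given number of cells inside a box: the content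
  sum (d + i) over the cells is largest for the diagram filled row by row, and that
  diagram also has the fewest cells in the rows i >= k_0. The first is proved by
  removing a full row or column, or shrinking the box.
*)
theory Submission
  imports Defs
begin

lemma digit_sum_0 [simp]: "digit_sum b 0 = 0"
  by (simp add: digit_sum.simps)

lemma digit_sum_mult_add:
  assumes "b \<ge> 2" "t < b"
  shows "digit_sum b (b * q + t) = digit_sum b q + t"
proof (cases "b * q + t = 0")
  case False
  then have "digit_sum b (b * q + t) = (b * q + t) mod b + digit_sum b ((b * q + t) div b)"
    using assms by (subst digit_sum.simps) simp
  then show ?thesis
    using assms by simp
qed (use assms in simp)

lemma digit_sum_Suc_le:
  assumes "b \<ge> 2"
  shows "digit_sum b (Suc y) \<le> digit_sum b y + 1"
proof (induction y rule: less_induct)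
  case (less y)
  have y: "y = b * (y div b) + y mod b" and ymod: "y mod b < b"
    using assms by simp_all
  show ?case
  proof (cases "Suc (y mod b) < b")
    case True
    have "Suc y = b * (y div b) + Suc (y mod b)"
      using y by simp
    then have "digit_sum b (Suc y) = digit_sum b (y div b) + Suc (y mod b)"
      using digit_sum_mult_add[OF assms True, of "y div b"] by simp
    then show ?thesis
      using digit_sum_mult_add[OF assms ymod, of "y div b"] y by simp
  next
    case False
    then have "y mod b = b - 1"
      using ymod by simp
    then have "Suc y = b * Suc (y div b) + 0" and smaller: "y div b < y"
      using y assms by (simp_all add: algebra_simps)
    then have "digit_sum b (Suc y) = digit_sum b (Suc (y div b))"
      using digit_sum_mult_add[OF assms, of 0 "Suc (y div b)"] assms by simp
    also have "\<dots> \<le> digit_sum b (y div b) + 1"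
      using less smaller by blast
    also have "\<dots> \<le> digit_sum b y + 1"
      using digit_sum_mult_add[OF assms ymod, of "y div b"] y by simp
    finally show ?thesis .
  qed
qed

text \<open>Here \<open>k\<^sub>0\<close> is the first \<open>i\<close> at which the last digit of \<open>Q + i\<close> wraps around, and \<open>\<kappa>\<close>
  is the digit sum lost in the resulting carry.\<close>

lemma digit_sum_add_digit:
  assumes "b \<ge> 2"
  obtains \<kappa> k\<^sub>0 where
    "\<And>i. i < b \<Longrightarrow> digit_sum b (Q + i) + \<kappa> * of_bool (k\<^sub>0 \<le> i) = digit_sum b Q + i"
proof
  define a r where "a = Q div b" and "r = Q mod b"
  have Q: "Q = b * a + r" and r: "r < b"
    using assms by (simp_all add: a_def r_def)
  fix i assume i: "i < b"
  show "digit_sum b (Q + i) + (digit_sum b a + b - digit_sum b (Suc a)) * of_bool (b - r \<le> i)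
      = digit_sum b Q + i"
  proof (cases "r + i < b")
    case True
    then have "\<not> b - r \<le> i"
      by simp
    then show ?thesis
      using Q digit_sum_mult_add[OF assms True, of a] digit_sum_mult_add[OF assms r, of a]
      by (simp add: add.assoc)
  next
    case False
    then have "Q + i = b * Suc a + (r + i - b)" and "r + i - b < b"
      using Q r i by simp_all
    then have "digit_sum b (Q + i) = digit_sum b (Suc a) + (r + i - b)"
      using digit_sum_mult_add[OF assms] by metis
    moreover have "digit_sum b (Suc a) \<le> digit_sum b a + b"
      using digit_sum_Suc_le[OF assms, of a] assms by simp
    moreover have "b - r \<le> i"
      using False by simp
    ultimately show ?thesis
      using Q digit_sum_mult_add[OF assms r, of a] by simp
  qed
qed

definition triangular :: "nat \<Rightarrow> nat" where
  "triangular n = (\<Sum>i<n. i)"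

lemma triangular_0 [simp]: "triangular 0 = 0"
  by (simp add: triangular_def)

lemma triangular_Suc [simp]: "triangular (Suc n) = triangular n + n"
  by (simp add: triangular_def)

lemma triangular_add: "triangular (m + k) = triangular m + triangular k + m * k"
  by (induction k) (simp_all add: algebra_simps)

lemma S_eq_sum_lessThan: "S b n = (\<Sum>j<n. digit_sum b j)"
  by (cases n) (simp_all add: S_def lessThan_atLeast0 sum.atLeast_Suc_lessThan)

lemma S_0 [simp]: "S b 0 = 0"
  by (simp add: S_def)

lemma S_Suc [simp]: "S b (Suc n) = S b n + digit_sum b n"
  by (simp add: S_eq_sum_lessThan)

lemma S_add: "S b (m + k) = S b m + (\<Sum>i<k. digit_sum b (m + i))"
  by (induction k) simp_all

lemma S_mult_base:
  assumes "b \<ge> 2"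
  shows "S b (b * q) = b * S b q + q * triangular b"
proof (induction q)
  case (Suc q)
  have "S b (b * Suc q) = S b (b * q) + (\<Sum>i<b. digit_sum b (b * q + i))"
    using S_add[of b "b * q" b] by (simp add: add.commute)
  also have "(\<Sum>i<b. digit_sum b (b * q + i)) = (\<Sum>i<b. digit_sum b q + i)"
    using digit_sum_mult_add[OF assms] by simp
  finally show ?case
    using Suc by (simp add: sum.distrib triangular_def algebra_simps)
qed simp

text \<open>The number of \<open>j < h\<close> with \<open>j mod b = d\<close>, for \<open>d < b\<close>.\<close>

definition residue_count :: "nat \<Rightarrow> nat \<Rightarrow> nat \<Rightarrow> nat" where
  "residue_count b h d = h div b + of_bool (d < h mod b)"

lemma sum_residue_count:
  assumes "b > 0"
  shows "(\<Sum>d<b. residue_count b h d) = h"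
proof -
  have "{..<b} \<inter> {d. d < h mod b} = {..<h mod b}"
    using assms by (auto dest: order.strict_trans[OF _ mod_less_divisor])
  then show ?thesis
    by (simp add: residue_count_def sum.distrib)
qed

lemma residue_count_mono:
  assumes "h \<le> h'"
  shows "residue_count b h d \<le> residue_count b h' d"
proof (cases "h div b < h' div b")
  case True
  then show ?thesis
    by (simp add: residue_count_def)
next
  case False
  then have "h div b = h' div b"
    using div_le_mono[OF assms, of b] by simp
  then have "h mod b \<le> h' mod b"
    using assms by (metis add_le_cancel_left div_mult_mod_eq)
  then show ?thesis
    using \<open>h div b = h' div b\<close> by (auto simp: residue_count_def)
qed

lemma residue_count_less:
  assumes "b \<ge> 2" "b < h"
  shows "residue_count b h d < h"
proof -
  have "2 * (h div b) \<le> b * (h div b)"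
    using assms(1) by simp
  also have "\<dots> \<le> h"
    by simp
  finally show ?thesis
    using assms by (simp add: residue_count_def)
qed

lemma residue_count_le: "residue_count b h d \<le> h"
proof (cases "d < h mod b")
  case True
  have "h div b + 1 \<le> h div b * b + h mod b"
  proof (cases "b = 0")
    case False
    then have "h div b \<le> h div b * b"
      by simp
    then show ?thesis
      using True by linarith
  qed (use True in simp)
  then show ?thesis
    using True by (simp add: residue_count_def)
qed (simp add: residue_count_def div_le_dividend)

lemma S_eq_sum_residue_count:
  assumes "b \<ge> 2"
  shows "S b h = (\<Sum>d<b. S b (residue_count b h d) + d * residue_count b h d)"
proof -
  define q t where "q = h div b" and "t = h mod b"
  have h: "h = b * q + t" and t: "t < b"
    using assms by (simp_all add: q_def t_def)
  have "(\<Sum>d<b. S b (residue_count b h d) + d * residue_count b h d)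
      = (\<Sum>d<b. S b q + q * d + of_bool (d < t) * (digit_sum b q + d))"
    by (rule sum.cong) (auto simp: residue_count_def q_def t_def)
  also have "\<dots> = b * S b q + q * triangular b + (\<Sum>d<t. digit_sum b q + d)"
  proof -
    have "{..<b} \<inter> {d. d < t} = {..<t}"
      using t by auto
    then show ?thesis
      by (simp add: sum.distrib triangular_def sum_distrib_left)
  qed
  also have "\<dots> = S b (b * q) + (\<Sum>i<t. digit_sum b (b * q + i))"
    using t by (simp add: S_mult_base[OF assms] digit_sum_mult_add[OF assms])
  also have "\<dots> = S b h"
    by (simp add: h S_add)
  finally show ?thesis ..
qed

text \<open>For \<open>T \<le> c * c\<close> this is \<open>S c T\<close>, all \<open>x < T\<close> having at most two digits. It is also the
  content (see below) of the diagram whose \<open>T\<close> cells \<open>(x mod c, x div c)\<close> fill rows of width \<open>c\<close>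
  one after the other.\<close>

definition two_digit_S :: "nat \<Rightarrow> nat \<Rightarrow> nat" where
  "two_digit_S c T = (\<Sum>x<T. x div c + x mod c)"

lemma two_digit_S_0 [simp]: "two_digit_S c 0 = 0"
  by (simp add: two_digit_S_def)

lemma two_digit_S_le_base:
  assumes "u \<le> c"
  shows "two_digit_S c u = triangular u"
  unfolding two_digit_S_def triangular_def by (rule sum.cong) (use assms in auto)

lemma two_digit_S_add_base:
  assumes "c > 0"
  shows "two_digit_S c (c + k) = triangular c + two_digit_S c k + k"
proof (induction k)
  case 0
  then show ?case
    using two_digit_S_le_base[of c c] by simp
next
  case (Suc k)
  have "(c + k) div c = k div c + 1"
    using assms by (simp add: div_add_self1)
  then show ?case
    using Suc by (simp add: two_digit_S_def)
qed

lemma two_digit_S_closed: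
  assumes "u < c"
  shows "two_digit_S c (q * c + u) = c * triangular q + q * triangular c + u * q + triangular u"
proof (induction q)
  case 0
  then show ?case
    using two_digit_S_le_base[of u c] assms by simp
next
  case (Suc q)
  have "two_digit_S c (Suc q * c + u) = two_digit_S c (c + (q * c + u))"
    by (simp add: algebra_simps)
  also have "\<dots> = triangular c + two_digit_S c (q * c + u) + (q * c + u)"
    using two_digit_S_add_base assms by simp
  finally show ?case
    using Suc by (simp add: algebra_simps)
qed

lemma two_digit_S_mono_base:
  assumes "T \<le> c * c"
  shows "two_digit_S c T \<le> two_digit_S (Suc c) T"
proof (cases "c = 0")
  case False
  define q u where "q = T div c" and "u = T mod c"
  have T: "T = q * c + u" and u: "u < c" and q: "q \<le> c"
    using False div_le_mono[OF assms, of c] by (simp_all add: q_def u_def)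
  have base_c: "two_digit_S c T = c * triangular q + q * triangular c + u * q + triangular u"
    using T two_digit_S_closed[OF u] by simp
  show ?thesis
  proof (cases "q \<le> u")
    case True
    then obtain v where v: "u = q + v"
      using le_Suc_ex by blast
    have "T = q * Suc c + v" and "v < Suc c"
      using T v u by simp_all
    then have "two_digit_S (Suc c) T
        = Suc c * triangular q + q * triangular (Suc c) + v * q + triangular v"
      using two_digit_S_closed[of v "Suc c" q] by simp
    then have "two_digit_S (Suc c) T + q * u = two_digit_S c T + q * c"
      unfolding base_c v by (simp add: triangular_add algebra_simps)
    moreover have "q * u \<le> q * c"
      using u by simp
    ultimately show ?thesis
      by linarith
  next
    case False
    then obtain p where p: "q = Suc p"
      using not0_implies_Suc by fastforce
    obtain w where w: "c = Suc p + w"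
      using q p le_Suc_ex by blast
    have "T = p * Suc c + (u + Suc w)" and "u + Suc w < Suc c"
      using T p w False by (simp_all add: algebra_simps)
    then have "two_digit_S (Suc c) T
        = Suc c * triangular p + p * triangular (Suc c) + (u + Suc w) * p + triangular (u + Suc w)"
      using two_digit_S_closed[of "u + Suc w" "Suc c" p] by simp
    also have "\<dots> = (c * triangular q + q * triangular c + u * q + triangular u) + u * w"
      unfolding p w by (simp add: triangular_add algebra_simps)
    finally show ?thesis
      using base_c by simp
  qed
qed (use assms in simp)

text \<open>\<open>\<tau> d\<close> is the height of column \<open>d\<close> of a Young diagram; the cell in column \<open>d\<close> and
  row \<open>i\<close> has content \<open>d + i\<close>.\<close>

definition diagram_content :: "nat \<Rightarrow> (nat \<Rightarrow> nat) \<Rightarrow> nat" where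
  "diagram_content c \<tau> = (\<Sum>d<c. triangular (\<tau> d) + d * \<tau> d)"

lemma diagram_content_le_of_remove_row:
  assumes c: "c > 0" and pos: "\<And>d. d < c \<Longrightarrow> 0 < \<tau> d"
    and le: "diagram_content c (\<lambda>d. \<tau> d - 1) \<le> two_digit_S c (\<Sum>d<c. \<tau> d - 1)"
  shows "diagram_content c \<tau> \<le> two_digit_S c (\<Sum>d<c. \<tau> d)"
proof -
  have "(\<Sum>d<c. \<tau> d) = (\<Sum>d<c. Suc (\<tau> d - 1))"
    using pos by (intro sum.cong) auto
  moreover have "diagram_content c \<tau>
      = (\<Sum>d<c. (triangular (\<tau> d - 1) + d * (\<tau> d - 1)) + (\<tau> d - 1) + d)"
    unfolding diagram_content_def
  proof (rule sum.cong)
    fix d assume "d \<in> {..<c}"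
    then have "\<tau> d = Suc (\<tau> d - 1)"
      using pos by simp
    then show "triangular (\<tau> d) + d * \<tau> d
        = (triangular (\<tau> d - 1) + d * (\<tau> d - 1)) + (\<tau> d - 1) + d"
      by (metis add.commute add.left_commute mult_Suc_right triangular_Suc)
  qed simp
  ultimately have "(\<Sum>d<c. \<tau> d) = c + (\<Sum>d<c. \<tau> d - 1)"
    and "diagram_content c \<tau> = diagram_content c (\<lambda>d. \<tau> d - 1) + (\<Sum>d<c. \<tau> d - 1) + triangular c"
    by (simp_all add: sum_Suc sum.distrib diagram_content_def triangular_def)
  then show ?thesis
    using le two_digit_S_add_base[OF c] by simp
qed

lemma diagram_content_le_of_remove_column:
  assumes full: "\<tau> 0 = Suc c" and empty: "\<tau> (Suc c) = 0"
    and le: "diagram_content (Suc c) (\<lambda>d. \<tau> (Suc d))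
      \<le> two_digit_S (Suc c) (\<Sum>d<Suc c. \<tau> (Suc d))"
  shows "diagram_content (Suc c) \<tau> \<le> two_digit_S (Suc c) (\<Sum>d<Suc c. \<tau> d)"
proof -
  have "(\<Sum>d<Suc c. \<tau> d) = Suc c + (\<Sum>d<Suc c. \<tau> (Suc d))"
    using full empty unfolding sum.lessThan_Suc_shift[of \<tau>] by simp
  moreover have "diagram_content (Suc c) \<tau>
      = diagram_content (Suc c) (\<lambda>d. \<tau> (Suc d)) + (\<Sum>d<Suc c. \<tau> (Suc d)) + triangular (Suc c)"
    using full empty
    unfolding diagram_content_def sum.lessThan_Suc_shift[of "\<lambda>d. triangular (\<tau> d) + d * \<tau> d"]
    by (simp add: sum.distrib algebra_simps)
  ultimately show ?thesis
    using le two_digit_S_add_base[of "Suc c"] by simp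
qed

lemma diagram_content_le_of_shrink_box:
  assumes height: "\<And>d. \<tau> d \<le> c" and empty: "\<tau> c = 0"
    and le: "diagram_content c \<tau> \<le> two_digit_S c (\<Sum>d<c. \<tau> d)"
  shows "diagram_content (Suc c) \<tau> \<le> two_digit_S (Suc c) (\<Sum>d<Suc c. \<tau> d)"
proof -
  have "two_digit_S c (\<Sum>d<c. \<tau> d) \<le> two_digit_S (Suc c) (\<Sum>d<c. \<tau> d)"
    using height sum_bounded_above[of "{..<c}" \<tau> c] by (simp add: two_digit_S_mono_base)
  then show ?thesis
    using le empty by (simp add: diagram_content_def)
qed

lemma diagram_content_le_two_digit_S:
  assumes "antimono \<tau>" and "\<tau> 0 \<le> c" and "\<And>d. c \<le> d \<Longrightarrow> \<tau> d = 0"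
  shows "diagram_content c \<tau> \<le> two_digit_S c (\<Sum>d<c. \<tau> d)"
  using assms
proof (induction "c + (\<Sum>d<c. \<tau> d)" arbitrary: c \<tau> rule: less_induct)
  case less
  note desc = antimonoD[OF less.prems(1)]
  show ?case
  proof (cases c)
    case 0
    then show ?thesis
      by (simp add: diagram_content_def)
  next
    case (Suc c')
    consider (full_row) "0 < \<tau> c'" | (full_column) "\<tau> 0 = c" "\<tau> c' = 0"
      | (smaller) "\<tau> c' = 0" "\<tau> 0 \<le> c'"
      using less.prems(2) Suc by linarith
    then show ?thesis
    proof cases
      case full_row
      have pos: "0 < \<tau> d" if "d < c" for d
        using full_row desc[of d c'] that Suc by simp
      have "(\<Sum>d<c. \<tau> d - 1) < (\<Sum>d<c. \<tau> d)"
        by (rule sum_strict_mono) (use pos Suc in auto)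
      then have "c + (\<Sum>d<c. \<tau> d - 1) < c + (\<Sum>d<c. \<tau> d)"
        by simp
      moreover have "antimono (\<lambda>d. \<tau> d - 1)"
        by (intro antimonoI diff_le_mono desc)
      moreover have "\<tau> 0 - 1 \<le> c" and "\<And>d. c \<le> d \<Longrightarrow> \<tau> d - 1 = 0"
        using less.prems(2,3) by simp_all
      ultimately have "diagram_content c (\<lambda>d. \<tau> d - 1) \<le> two_digit_S c (\<Sum>d<c. \<tau> d - 1)"
        by (rule less.hyps)
      then show ?thesis
        using diagram_content_le_of_remove_row[of c \<tau>] pos Suc by blast
    next
      case full_column
      have "c + (\<Sum>d<c. \<tau> (Suc d)) < c + (\<Sum>d<c. \<tau> d)"
        using full_column less.prems(3) unfolding Suc sum.lessThan_Suc_shift[of \<tau>] by simp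
      moreover have "antimono (\<lambda>d. \<tau> (Suc d))"
        by (intro antimonoI desc) simp
      moreover have "\<tau> (Suc 0) \<le> c" and "\<And>d. c \<le> d \<Longrightarrow> \<tau> (Suc d) = 0"
        using less.prems(2,3) desc[of 0 1] by simp_all
      ultimately have "diagram_content c (\<lambda>d. \<tau> (Suc d)) \<le> two_digit_S c (\<Sum>d<c. \<tau> (Suc d))"
        by (rule less.hyps)
      then show ?thesis
        using diagram_content_le_of_remove_column[of \<tau> c'] full_column less.prems(3) Suc by simp
    next
      case smaller
      have "c' + (\<Sum>d<c'. \<tau> d) < c + (\<Sum>d<c. \<tau> d)"
        using smaller Suc by simp
      moreover have "\<And>d. c' \<le> d \<Longrightarrow> \<tau> d = 0"
        using smaller desc[of c'] by (metis le_zero_eq)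
      ultimately have "diagram_content c' \<tau> \<le> two_digit_S c' (\<Sum>d<c'. \<tau> d)"
        using less.hyps less.prems(1) smaller(2) by blast
      moreover have "\<tau> d \<le> c'" for d
        using smaller desc[of 0 d] by simp
      ultimately show ?thesis
        using diagram_content_le_of_shrink_box[of \<tau> c'] smaller Suc by simp
    qed
  qed
qed

lemma sum_diff_card_le_sum_diff:
  fixes f :: "'a \<Rightarrow> nat"
  assumes "finite A"
  shows "sum f A - card A * k \<le> (\<Sum>x\<in>A. f x - k)"
  using assms by (induction A rule: finite_induct) auto

lemma sum_lessThan_of_bool_le: "(\<Sum>i<n. of_bool (k \<le> i) :: nat) = n - k"
proof -
  have "{..<n} \<inter> {i. k \<le> i} = {k..<n}"
    by auto
  then show ?thesis
    by simp
qed

lemma diagram_weighted_content_le: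
  fixes \<tau> f :: "nat \<Rightarrow> nat"
  assumes desc: "antimono \<tau>" and height: "\<tau> 0 \<le> c" and width: "\<And>d. c \<le> d \<Longrightarrow> \<tau> d = 0"
    and f: "\<And>i. i < c \<Longrightarrow> f i + \<kappa> * of_bool (k\<^sub>0 \<le> i) = a + i"
  shows "(\<Sum>d<c. \<Sum>i<\<tau> d. f i + d) \<le> (\<Sum>x<(\<Sum>d<c. \<tau> d). f (x div c) + x mod c)"
    (is "?lhs \<le> ?rhs")
proof (cases "c = 0")
  case False
  define T where "T = (\<Sum>d<c. \<tau> d)"
  have bound: "\<tau> d \<le> c" for d
    using height antimonoD[OF desc, of 0 d] by simp
  then have T: "T \<le> c * c"
    unfolding T_def using sum_bounded_above[of "{..<c}" \<tau> c] by simp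
  define high_cells where "high_cells = (\<Sum>d<c. \<Sum>i<\<tau> d. of_bool (k\<^sub>0 \<le> i) :: nat)"
  define high_cells_row_filled where
    "high_cells_row_filled = (\<Sum>x<T. of_bool (k\<^sub>0 \<le> x div c) :: nat)"
  have "?lhs + \<kappa> * high_cells = (\<Sum>d<c. \<Sum>i<\<tau> d. a + i + d)"
    unfolding high_cells_def sum_distrib_left sum.distrib[symmetric]
    using bound f by (intro sum.cong refl) (simp add: order_less_le_trans)
  also have "\<dots> = T * a + diagram_content c \<tau>"
    by (simp add: T_def diagram_content_def triangular_def sum.distrib sum_distrib_left mult.commute)
  also have "\<dots> \<le> T * a + two_digit_S c T"
    using diagram_content_le_two_digit_S[OF desc height width] by (simp add: T_def)
  also have "\<dots> = ?rhs + \<kappa> * high_cells_row_filled"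
  proof -
    have "x div c < c" if "x < T" for x
      using that T by (simp add: less_mult_imp_div_less)
    then have "(\<Sum>x<T. f (x div c) + x mod c + \<kappa> * of_bool (k\<^sub>0 \<le> x div c))
        = (\<Sum>x<T. a + (x div c + x mod c))"
      using f by (intro sum.cong refl) (simp add: algebra_simps)
    then show ?thesis
      by (simp add: T_def two_digit_S_def high_cells_row_filled_def sum.distrib sum_distrib_left
          mult.commute del: sum_of_bool_eq)
  qed
  also have "\<dots> \<le> ?rhs + \<kappa> * high_cells"
  proof -
    have "(k\<^sub>0 \<le> x div c) = (c * k\<^sub>0 \<le> x)" for x
      using False by (simp add: less_eq_div_iff_mult_less_eq mult.commute)
    then have "high_cells_row_filled = T - c * k\<^sub>0"
      by (simp add: high_cells_row_filled_def sum_lessThan_of_bool_le del: sum_of_bool_eq)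
    also have "\<dots> \<le> (\<Sum>d<c. \<tau> d - k\<^sub>0)"
      unfolding T_def using sum_diff_card_le_sum_diff[of "{..<c}" \<tau> k\<^sub>0] by simp
    also have "\<dots> = high_cells"
      by (simp add: high_cells_def sum_lessThan_of_bool_le del: sum_of_bool_eq)
    finally show ?thesis
      by simp
  qed
  finally show ?thesis
    by simp
qed simp

lemma S_sum_antimono_le_near_constant:
  assumes b: "b \<ge> 2" and desc: "antimono \<tau>" and height: "\<tau> 0 \<le> b"
    and width: "\<And>d. b \<le> d \<Longrightarrow> \<tau> d = 0"
  shows "(\<Sum>d<b. S b (Q + \<tau> d) + d * (Q + \<tau> d)) \<le> S b (b * Q + (\<Sum>d<b. \<tau> d))"
proof -
  obtain \<kappa> k\<^sub>0 where carry:
    "\<And>i. i < b \<Longrightarrow> digit_sum b (Q + i) + \<kappa> * of_bool (k\<^sub>0 \<le> i) = digit_sum b Q + i"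
    using digit_sum_add_digit[OF b] by metis
  have "(\<Sum>d<b. S b (Q + \<tau> d) + d * (Q + \<tau> d))
      = b * S b Q + Q * triangular b + (\<Sum>d<b. \<Sum>i<\<tau> d. digit_sum b (Q + i) + d)"
    by (simp add: S_add sum.distrib triangular_def sum_distrib_left sum_distrib_right algebra_simps)
  also have "\<dots> \<le> b * S b Q + Q * triangular b
      + (\<Sum>x<(\<Sum>d<b. \<tau> d). digit_sum b (Q + x div b) + x mod b)"
    using diagram_weighted_content_le[OF desc height width carry] by simp
  also have "\<dots> = S b (b * Q + (\<Sum>d<b. \<tau> d))"
  proof -
    have "digit_sum b (b * Q + x) = digit_sum b (Q + x div b) + x mod b" for x
      using digit_sum_mult_add[OF b, of "x mod b" "Q + x div b"] b
      by (simp add: algebra_simps)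
    then show ?thesis
      by (simp add: S_add S_mult_base[OF b])
  qed
  finally show ?thesis .
qed

lemma sum_S_eq_sum_residue_columns:
  assumes b: "b \<ge> 2"
  shows "(\<Sum>k<b. S b (h k) + k * h k)
    = (\<Sum>d<b. (\<Sum>k<b. S b (residue_count b (h k) d) + k * residue_count b (h k) d)
        + d * (\<Sum>k<b. residue_count b (h k) d))"
proof -
  have "(\<Sum>k<b. S b (h k) + k * h k)
      = (\<Sum>k<b. \<Sum>d<b. S b (residue_count b (h k) d) + d * residue_count b (h k) d
          + k * residue_count b (h k) d)"
  proof (rule sum.cong[OF refl])
    fix k
    have "k * h k = (\<Sum>d<b. k * residue_count b (h k) d)"
      using sum_residue_count[of b "h k"] b by (simp flip: sum_distrib_left)
    then show "S b (h k) + k * h k = (\<Sum>d<b. S b (residue_count b (h k) d)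
        + d * residue_count b (h k) d + k * residue_count b (h k) d)"
      by (simp add: S_eq_sum_residue_count[OF b, of "h k"] sum.distrib)
  qed
  then show ?thesis
    by (subst (asm) sum.swap) (simp add: sum.distrib sum_distrib_left algebra_simps)
qed

lemma S_sum_residue_columns_le:
  assumes b: "b \<ge> 2"
  shows "(\<Sum>d<b. S b (\<Sum>k<b. residue_count b (h k) d) + d * (\<Sum>k<b. residue_count b (h k) d))
    \<le> S b (\<Sum>k<b. h k)"
proof -
  define Q where "Q = (\<Sum>k<b. h k div b)"
  define \<tau> :: "nat \<Rightarrow> nat" where "\<tau> d = (\<Sum>k<b. of_bool (d < h k mod b))" for d
  have column_sum: "(\<Sum>k<b. residue_count b (h k) d) = Q + \<tau> d" for d
    unfolding residue_count_def Q_def \<tau>_def by (rule sum.distrib)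
  have "(\<Sum>d<b. S b (Q + \<tau> d) + d * (Q + \<tau> d)) \<le> S b (b * Q + (\<Sum>d<b. \<tau> d))"
  proof (rule S_sum_antimono_le_near_constant[OF b])
    show "antimono \<tau>"
      unfolding \<tau>_def by (auto intro!: antimonoI sum_mono simp del: sum_of_bool_eq)
    show "\<tau> 0 \<le> b"
      unfolding \<tau>_def using sum_bounded_above[of "{..<b}" "\<lambda>k. of_bool (0 < h k mod b) :: nat" 1]
      by (simp del: sum_of_bool_eq)
    show "\<tau> d = 0" if "b \<le> d" for d
    proof -
      have "\<not> d < h k mod b" for k
        using that b mod_less_divisor[of b "h k"] by linarith
      then show ?thesis
        by (simp add: \<tau>_def del: sum_of_bool_eq)
    qed
  qed
  also have "b * Q + (\<Sum>d<b. \<tau> d) = (\<Sum>d<b. \<Sum>k<b. residue_count b (h k) d)"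
    by (simp add: column_sum sum.distrib)
  also have "\<dots> = (\<Sum>k<b. h k)"
    using sum_residue_count[of b] b by (subst sum.swap) simp
  finally show ?thesis
    by (simp add: column_sum)
qed

lemma S_sum_antimono_le:
  assumes b: "b \<ge> 2" and "antimono h" and "\<And>k. b \<le> k \<Longrightarrow> h k = 0"
  shows "(\<Sum>k<b. S b (h k) + k * h k) \<le> S b (\<Sum>k<b. h k)"
  using assms(2,3)
proof (induction "\<Sum>k<b. h k" arbitrary: h rule: less_induct)
  case less
  show ?case
  proof (cases "h 0 \<le> b")
    case True
    then show ?thesis
      using S_sum_antimono_le_near_constant[OF b less.prems(1) True less.prems(2), of 0] by simp
  next
    case False
    define m where "m d k = residue_count b (h k) d" for d k
    have column_le: "(\<Sum>k<b. S b (m d k) + k * m d k) \<le> S b (\<Sum>k<b. m d k)" for d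
    proof (rule less.hyps)
      show "(\<Sum>k<b. m d k) < (\<Sum>k<b. h k)"
        unfolding m_def
      proof (rule sum_strict_mono_ex1)
        show "\<exists>k\<in>{..<b}. residue_count b (h k) d < h k"
          using False residue_count_less[OF b, of "h 0"] b by (intro bexI[of _ 0]) simp_all
      qed (simp_all add: residue_count_le)
      show "antimono (m d)"
        unfolding m_def by (intro antimonoI residue_count_mono antimonoD[OF less.prems(1)])
      show "m d k = 0" if "b \<le> k" for k
        using less.prems(2)[OF that] by (simp add: m_def residue_count_def)
    qed
    have "(\<Sum>k<b. S b (h k) + k * h k)
        = (\<Sum>d<b. (\<Sum>k<b. S b (m d k) + k * m d k) + d * (\<Sum>k<b. m d k))"
      unfolding m_def by (rule sum_S_eq_sum_residue_columns[OF b])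
    also have "\<dots> \<le> (\<Sum>d<b. S b (\<Sum>k<b. m d k) + d * (\<Sum>k<b. m d k))"
      using column_le by (intro sum_mono) simp
    also have "\<dots> \<le> S b (\<Sum>k<b. h k)"
      unfolding m_def by (rule S_sum_residue_columns_le[OF b])
    finally show ?thesis .
  qed
qed

lemma sum_lessThan_reverse_padded:
  fixes r b :: nat and n :: "nat \<Rightarrow> 'a::zero" and g :: "nat \<Rightarrow> 'a \<Rightarrow> 'b::comm_monoid_add"
  assumes "r \<le> b" and "\<And>k. g k 0 = 0"
  shows "(\<Sum>k<b. g k (if k < r then n (r - k) else 0)) = (\<Sum>i = 1..r. g (r - i) (n i))"
proof -
  have "(\<Sum>k<b. g k (if k < r then n (r - k) else 0)) = (\<Sum>k<r. g k (n (r - k)))"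
    using assms by (intro sum.mono_neutral_cong_right) auto
  also have "\<dots> = (\<Sum>i = 1..r. g (r - i) (n i))"
    by (rule sum.reindex_bij_witness[of _ "\<lambda>i. r - i" "\<lambda>k. r - k"]) auto
  finally show ?thesis .
qed

theorem theorem5:
  fixes b r :: nat and n :: "nat \<Rightarrow> nat"
  assumes "b \<ge> 2" and "1 \<le> r" and "r \<le> b"
    and "\<And>i j. 1 \<le> i \<Longrightarrow> i \<le> j \<Longrightarrow> j \<le> r \<Longrightarrow> n i \<le> n j"
  shows "(\<Sum>i = 1..r. S b (n i)) + (\<Sum>i = 1..r - 1. (r - i) * n i)
           \<le> S b (\<Sum>i = 1..r. n i)"
proof -
  define h where "h k = (if k < r then n (r - k) else 0)" for k
  have "antimono h"
    using assms(4) by (intro antimonoI) (auto simp: h_def)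
  have "(\<Sum>i = 1..r - 1. (r - i) * n i) = (\<Sum>i = 1..r. (r - i) * n i)"
    using assms(2) by (cases r) (simp_all add: sum.cl_ivl_Suc)
  then have "(\<Sum>i = 1..r. S b (n i)) + (\<Sum>i = 1..r - 1. (r - i) * n i)
      = (\<Sum>k<b. S b (h k) + k * h k)"
    unfolding h_def using sum_lessThan_reverse_padded[OF assms(3), of "\<lambda>k v. S b v + k * v"]
    by (simp add: sum.distrib)
  also have "\<dots> \<le> S b (\<Sum>k<b. h k)"
    by (rule S_sum_antimono_le[OF assms(1) \<open>antimono h\<close>]) (use assms(3) in \<open>simp add: h_def\<close>)
  also have "(\<Sum>k<b. h k) = (\<Sum>i = 1..r. n i)"
    unfolding h_def using sum_lessThan_reverse_padded[OF assms(3), of "\<lambda>k v. v"] by simp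
  finally show ?thesis .
qed

end
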